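(* Let $g:[a,b]\to\mathbb R$ be increasing and left-continuous at every point of $(a,b)$, and let $f:[a,b]\to\mathbb R$ be $g$-Lipschitz continuous with Lipschitz constant $H$. Then $f^C$ is $g^C$-Lipschitz continuous with Lipschitz constant $H$.
   Context: For a function $\varphi:[a,b]\to\mathbb R$ having right limits, $\Delta^+\varphi(t)=\varphi(t^+)-\varphi(t)$, its jump part is $\varphi^B(t)=\sum_{s\in[a,t)}\Delta^+\varphi(s)$ and its continuous part is $\varphi^C=\varphi-\varphi^B$ (applied to both $f$ and $g$). For functions $u,v$ on $[a,b]$, $u$ is $v$-Lipschitz continuous with constant $H$ if $|u(t)-u(s)|\le H|v(t)-v(s)|$ for all $t,s\in[a,b]$. *)

theory Defs
  imports "HOL-Analysis.Analysis"
begin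

definition rlim :: "(real \<Rightarrow> real) \<Rightarrow> real \<Rightarrow> real" where
  "rlim \<phi> t = Lim (at_right t) \<phi>"

definition jump_plus :: "(real \<Rightarrow> real) \<Rightarrow> real \<Rightarrow> real" where
  "jump_plus \<phi> t = rlim \<phi> t - \<phi> t"

definition jump_part :: "real \<Rightarrow> (real \<Rightarrow> real) \<Rightarrow> real \<Rightarrow> real" where
  "jump_part a \<phi> t = infsum (jump_plus \<phi>) {a..<t}"

definition cont_part :: "real \<Rightarrow> (real \<Rightarrow> real) \<Rightarrow> real \<Rightarrow> real" where
  "cont_part a \<phi> t = \<phi> t - jump_part a \<phi> t"

definition lipschitz_wrt :: "real \<Rightarrow> real \<Rightarrow> (real \<Rightarrow> real) \<Rightarrow> (real \<Rightarrow> real) \<Rightarrow> real \<Rightarrow> bool" where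
  "lipschitz_wrt a b u v H \<longleftrightarrow>
     (\<forall>t\<in>{a..b}. \<forall>s\<in>{a..b}. \<bar>u t - u s\<bar> \<le> H * \<bar>v t - v s\<bar>)"

end

theory Submission
  imports Defs
begin

text \<open>
  If \<open>|f t - f s| \<le> H (g t - g s)\<close> for \<open>s \<le> t\<close> with \<open>g\<close> increasing, then \<open>f + H g\<close> is
  increasing too, so both \<open>f\<close> and \<open>g\<close> have right limits. Passing to right limits gives the
  same bound for each right jump, \<open>|\<Delta>\<^sup>+f| \<le> H \<Delta>\<^sup>+g\<close>, and, splitting \<open>[s,t]\<close> at the points of a
  finite set \<open>F\<close> of jump points, the bound
  \<open>|f t - f s - \<Sigma>\<^sub>F \<Delta>\<^sup>+f| \<le> H (g t - g s - \<Sigma>\<^sub>F \<Delta>\<^sup>+g)\<close>.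
  For \<open>f = g\<close> this shows that the jumps of \<open>g\<close> are summable; the jumps of \<open>f\<close> are then
  dominated, and letting \<open>F\<close> exhaust \<open>[s,t)\<close> yields exactly the increment bound for the
  continuous parts.
\<close>

lemma mono_on_tendsto_rlim:
  fixes \<phi> :: "real \<Rightarrow> real"
  assumes mono: "mono_on {a..b} \<phi>" and u: "a \<le> u" "u < b"
  shows "(\<phi> \<longlongrightarrow> rlim \<phi> u) (at_right u)"
proof -
  have "(\<phi> \<longlongrightarrow> Inf (\<phi> ` ({u<..} \<inter> {a..b}))) (at u within ({u<..} \<inter> {a..b}))"
    by (rule Lim_right_bound[where K="\<phi> u"]) (use mono u in \<open>auto intro: mono_onD\<close>)
  moreover have "at u within ({u<..} \<inter> {a..b}) = at u within {u..b}"
    by (rule at_within_nhd[where S=UNIV]) (use u in auto)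
  moreover have "at u within {u..b} = at_right u"
    using u(2) by (rule at_within_Icc_at_right)
  ultimately have "(\<phi> \<longlongrightarrow> Inf (\<phi> ` ({u<..} \<inter> {a..b}))) (at_right u)"
    by simp
  then show ?thesis
    unfolding rlim_def using tendsto_Lim trivial_limit_at_right_real by metis
qed

lemma rlim_eqI:
  assumes "(\<phi> \<longlongrightarrow> L) (at_right u)"
  shows "rlim \<phi> u = L"
  unfolding rlim_def using assms by (intro tendsto_Lim) simp_all

lemma jump_part_diff_eq_infsum:
  assumes summable: "jump_plus \<phi> summable_on {a..<b}" and st: "a \<le> s" "s \<le> t" "t \<le> b"
  shows "jump_part a \<phi> t - jump_part a \<phi> s = infsum (jump_plus \<phi>) {s..<t}"
proof -
  have "{a..<t} = {a..<s} \<union> {s..<t}"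
    using st by auto
  moreover have "infsum (jump_plus \<phi>) ({a..<s} \<union> {s..<t})
      = infsum (jump_plus \<phi>) {a..<s} + infsum (jump_plus \<phi>) {s..<t}"
    by (rule infsum_Un_disjoint) (use st in \<open>auto intro: summable_on_subset_banach[OF summable]\<close>)
  ultimately show ?thesis
    unfolding jump_part_def by simp
qed

locale lipschitz_wrt_increasing =
  fixes a b H :: real and f g :: "real \<Rightarrow> real"
  assumes mono_g: "mono_on {a..b} g"
    and lipschitz: "lipschitz_wrt a b f g H"
begin

lemma increment_bound:
  assumes "a \<le> x" "x \<le> y" "y \<le> b"
  shows "\<bar>f y - f x\<bar> \<le> H * (g y - g x)"
proof -
  have "g x \<le> g y"
    using assms by (intro mono_onD[OF mono_g]) auto
  moreover have "\<bar>f y - f x\<bar> \<le> H * \<bar>g y - g x\<bar>"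
    using lipschitz assms unfolding lipschitz_wrt_def by auto
  ultimately show ?thesis
    by simp
qed

lemma self: "lipschitz_wrt_increasing a b 1 g g"
  by unfold_locales (simp_all add: mono_g lipschitz_wrt_def)

lemma mono_on_add_scaled: "mono_on {a..b} (\<lambda>x. f x + H * g x)"
proof (rule mono_onI)
  fix x y assume "x \<in> {a..b}" "y \<in> {a..b}" "x \<le> y"
  then have "\<bar>f y - f x\<bar> \<le> H * (g y - g x)"
    by (intro increment_bound) auto
  then show "f x + H * g x \<le> f y + H * g y"
    by (simp add: right_diff_distrib)
qed

lemma tendsto_rlim_g:
  assumes "a \<le> u" "u < b"
  shows "(g \<longlongrightarrow> rlim g u) (at_right u)"
  using mono_on_tendsto_rlim[OF mono_g assms] .

lemma tendsto_rlim_f: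
  assumes u: "a \<le> u" "u < b"
  shows "(f \<longlongrightarrow> rlim f u) (at_right u)"
proof -
  let ?h = "\<lambda>x. f x + H * g x"
  have "((\<lambda>x. ?h x - H * g x) \<longlongrightarrow> rlim ?h u - H * rlim g u) (at_right u)"
    by (intro tendsto_intros mono_on_tendsto_rlim[OF mono_on_add_scaled u] tendsto_rlim_g[OF u])
  then have "(f \<longlongrightarrow> rlim ?h u - H * rlim g u) (at_right u)"
    by simp
  then show ?thesis
    using rlim_eqI by metis
qed

lemma rlim_increment_bound:
  assumes uv: "a \<le> u" "u < v" "v \<le> b"
  shows "\<bar>f v - rlim f u\<bar> \<le> H * (g v - rlim g u)"
proof (rule tendsto_le[of "at_right u"])
  show "((\<lambda>x. H * (g v - g x)) \<longlongrightarrow> H * (g v - rlim g u)) (at_right u)"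
    using uv by (intro tendsto_intros tendsto_rlim_g) auto
  show "((\<lambda>x. \<bar>f v - f x\<bar>) \<longlongrightarrow> \<bar>f v - rlim f u\<bar>) (at_right u)"
    using uv by (intro tendsto_intros tendsto_rlim_f) auto
  show "\<forall>\<^sub>F x in at_right u. \<bar>f v - f x\<bar> \<le> H * (g v - g x)"
    unfolding eventually_at_right[OF uv(2)] using uv by (auto intro!: increment_bound)
qed simp

lemma jump_plus_bound:
  assumes u: "a \<le> u" "u < b"
  shows "\<bar>jump_plus f u\<bar> \<le> H * jump_plus g u"
  unfolding jump_plus_def
proof (rule tendsto_le[of "at_right u"])
  show "((\<lambda>x. H * (g x - g u)) \<longlongrightarrow> H * (rlim g u - g u)) (at_right u)"
    using u by (intro tendsto_intros tendsto_rlim_g) auto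
  show "((\<lambda>x. \<bar>f x - f u\<bar>) \<longlongrightarrow> \<bar>rlim f u - f u\<bar>) (at_right u)"
    using u by (intro tendsto_intros tendsto_rlim_f) auto
  show "\<forall>\<^sub>F x in at_right u. \<bar>f x - f u\<bar> \<le> H * (g x - g u)"
    unfolding eventually_at_right[OF u(2)] using u by (auto intro!: exI[of _ b] increment_bound)
qed simp

lemma jump_plus_g_nonneg:
  assumes "a \<le> u" "u < b"
  shows "0 \<le> jump_plus g u"
  using lipschitz_wrt_increasing.jump_plus_bound[OF self assms] by simp

lemma sum_jump_plus_bound:
  assumes "finite F" "F \<subseteq> {s..<t}" "a \<le> s" "s \<le> t" "t \<le> b"
  shows "\<bar>f t - f s - sum (jump_plus f) F\<bar> \<le> H * (g t - g s - sum (jump_plus g) F)"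
  using assms
proof (induction F arbitrary: t rule: finite_linorder_max_induct)
  case empty
  then show ?case
    by (simp add: increment_bound)
next
  case (insert c F)
  then have c: "s \<le> c" "c < t" and "c \<notin> F"
    by auto
  have "\<bar>f c - f s - sum (jump_plus f) F\<bar> \<le> H * (g c - g s - sum (jump_plus g) F)"
    using insert by (intro insert.IH) auto
  moreover have "\<bar>f t - rlim f c\<bar> \<le> H * (g t - rlim g c)"
    using insert.prems c by (intro rlim_increment_bound) auto
  moreover have "sum (jump_plus \<phi>) (insert c F) = rlim \<phi> c - \<phi> c + sum (jump_plus \<phi>) F" for \<phi>
    using insert.hyps(1) \<open>c \<notin> F\<close> by (simp add: jump_plus_def)
  ultimately show ?case
    by (smt (verit, best) distrib_left)
qed

lemma jump_plus_g_summable: "jump_plus g summable_on {a..<b}"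
proof (rule nonneg_bdd_above_summable_on)
  show "0 \<le> jump_plus g x" if "x \<in> {a..<b}" for x
    using that by (intro jump_plus_g_nonneg) auto
  show "bdd_above (sum (jump_plus g) ` {F. F \<subseteq> {a..<b} \<and> finite F})"
  proof (rule bdd_aboveI2)
    fix F assume F: "F \<in> {F. F \<subseteq> {a..<b} \<and> finite F}"
    show "sum (jump_plus g) F \<le> \<bar>g b - g a\<bar>"
    proof (cases "a \<le> b")
      case True
      then show ?thesis
        using lipschitz_wrt_increasing.sum_jump_plus_bound[OF self, of F a b] F by auto
    next
      case False
      then show ?thesis
        using F by auto
    qed
  qed
qed

lemma jump_plus_f_summable: "jump_plus f summable_on {a..<b}"
proof (rule Infinite_Sum.abs_summable_summable)
  have "(\<lambda>x. \<bar>H\<bar> * jump_plus g x) summable_on {a..<b}"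
    by (intro summable_on_cmult_right jump_plus_g_summable)
  then show "(\<lambda>x. norm (jump_plus f x)) summable_on {a..<b}"
  proof (rule Infinite_Sum.abs_summable_on_comparison_test')
    fix x assume x: "x \<in> {a..<b}"
    then have "\<bar>jump_plus f x\<bar> \<le> H * jump_plus g x" "0 \<le> jump_plus g x"
      by (auto intro: jump_plus_bound jump_plus_g_nonneg)
    then show "norm (jump_plus f x) \<le> \<bar>H\<bar> * jump_plus g x"
      by (simp add: abs_mult) (metis abs_ge_self order.trans mult_right_mono)
  qed
qed

lemma infsum_jump_plus_bound:
  assumes st: "a \<le> s" "s \<le> t" "t \<le> b"
  shows "\<bar>f t - f s - infsum (jump_plus f) {s..<t}\<bar>
    \<le> H * (g t - g s - infsum (jump_plus g) {s..<t})"
proof (rule tendsto_le[of "finite_subsets_at_top {s..<t}"])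
  have sub: "{s..<t} \<subseteq> {a..<b}"
    using st by auto
  have "(sum (jump_plus \<phi>) \<longlongrightarrow> infsum (jump_plus \<phi>) {s..<t}) (finite_subsets_at_top {s..<t})"
    if "jump_plus \<phi> summable_on {a..<b}" for \<phi>
    using has_sum_infsum[OF summable_on_subset_banach[OF that sub]] unfolding has_sum_def .
  note sums = this[OF jump_plus_f_summable] this[OF jump_plus_g_summable]
  show "((\<lambda>F. H * (g t - g s - sum (jump_plus g) F))
      \<longlongrightarrow> H * (g t - g s - infsum (jump_plus g) {s..<t})) (finite_subsets_at_top {s..<t})"
    by (intro tendsto_intros sums)
  show "((\<lambda>F. \<bar>f t - f s - sum (jump_plus f) F\<bar>)
      \<longlongrightarrow> \<bar>f t - f s - infsum (jump_plus f) {s..<t}\<bar>) (finite_subsets_at_top {s..<t})"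
    by (intro tendsto_intros sums)
  show "\<forall>\<^sub>F F in finite_subsets_at_top {s..<t}.
      \<bar>f t - f s - sum (jump_plus f) F\<bar> \<le> H * (g t - g s - sum (jump_plus g) F)"
    using st by (intro eventually_finite_subsets_at_top_weakI sum_jump_plus_bound)
qed simp

lemma cont_part_increment_bound:
  assumes st: "a \<le> s" "s \<le> t" "t \<le> b"
  shows "\<bar>cont_part a f t - cont_part a f s\<bar> \<le> H * (cont_part a g t - cont_part a g s)"
proof -
  have "cont_part a f t - cont_part a f s = f t - f s - infsum (jump_plus f) {s..<t}"
    using jump_part_diff_eq_infsum[OF jump_plus_f_summable st] unfolding cont_part_def by simp
  moreover have "cont_part a g t - cont_part a g s = g t - g s - infsum (jump_plus g) {s..<t}"
    using jump_part_diff_eq_infsum[OF jump_plus_g_summable st] unfolding cont_part_def by simp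
  ultimately show ?thesis
    using infsum_jump_plus_bound[OF st] by simp
qed

lemma lipschitz_wrt_cont_part: "lipschitz_wrt a b (cont_part a f) (cont_part a g) H"
proof -
  have "\<bar>cont_part a f t - cont_part a f s\<bar> \<le> H * \<bar>cont_part a g t - cont_part a g s\<bar>"
    if "a \<le> s" "s \<le> t" "t \<le> b" for s t
    using lipschitz_wrt_increasing.cont_part_increment_bound[OF self that]
      cont_part_increment_bound[OF that] by simp
  then show ?thesis
    unfolding lipschitz_wrt_def by (metis abs_minus_commute atLeastAtMost_iff linorder_le_cases)
qed

end

theorem mainTheorem5:
  fixes f g :: "real \<Rightarrow> real" and a b H :: real
  assumes "mono_on {a..b} g"
    and "\<And>t. t \<in> {a<..<b} \<Longrightarrow> continuous (at_left t) g"
    and "lipschitz_wrt a b f g H"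
  shows "lipschitz_wrt a b (cont_part a f) (cont_part a g) H"
proof -
  interpret lipschitz_wrt_increasing a b H f g
    using assms(1,3) by unfold_locales
  show ?thesis
    by (rule lipschitz_wrt_cont_part)
qed

end
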